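(* Let $f:\mathbb{R}^n\to\mathbb{R}$ be $\mathcal C^2$, $\mu$-strongly convex, with $L$-Lipschitz gradient and $\eta$-Lipschitz Hessian $\nabla^2 f$ (in operator norm). Let $k\ge1$, $C\ge1$, $x_0\in\mathbb{R}^n$, and $x_{i+1}=x_i-\frac1L\nabla f(x_i)$ for $i=0,\dots,k-1$. Define $\xi(x)=\frac1L\big(\nabla^2f(x_0)x-\nabla f(x)\big)$. Then $\xi$ is $\frac{\eta}{L^2}kC\|\nabla f(x_0)\|$-Lipschitz on the set $B_C=\{\sum_{i=0}^kc_ix_i : c\in\mathbb{R}^{k+1},\ \mathbf 1^Tc=1,\ \|c\|_1\le C\}$.
   Context: $\|\cdot\|$ is the Euclidean norm (operator norm for matrices), and $\|c\|_1=\sum_i|c_i|$. *)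

theory Defs
  imports "HOL-Analysis.Analysis"
begin

end

theory Submission
  imports Defs
begin

text \<open>Co-coercivity of the gradient of a convex function with \<open>L\<close>-Lipschitz gradient makes the
  gradient step \<open>y \<mapsto> y - grad y / L\<close> nonexpansive, so no step of the iteration is longer than the
  first one, \<open>\<parallel>grad (x 0)\<parallel> / L\<close>. Hence every iterate lies within \<open>k \<parallel>grad (x 0)\<parallel> / L\<close> of
  \<open>x 0\<close>, and every affine combination with \<open>\<parallel>c\<parallel>\<^sub>1 \<le> C\<close> within \<open>R = k C \<parallel>grad (x 0)\<parallel> / L\<close>.
  The derivative of \<open>\<xi>\<close> at \<open>w\<close> is \<open>(Hess (x 0) - Hess w) / L\<close>, of norm at most \<open>\<eta> R / L\<close> on
  that ball, and the mean value inequality gives the Lipschitz bound.\<close>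

lemma convex_on_norm_power2: "convex_on UNIV (\<lambda>y::'a::real_normed_vector. (norm y)\<^sup>2)"
proof (rule convex_onI)
  fix t :: real and y z :: 'a
  assume t: "0 < t" "t < 1"
  have "norm ((1 - t) *\<^sub>R y + t *\<^sub>R z) \<le> (1 - t) * norm y + t * norm z"
    using t norm_triangle_ineq[of "(1 - t) *\<^sub>R y" "t *\<^sub>R z"] by simp
  then have "(norm ((1 - t) *\<^sub>R y + t *\<^sub>R z))\<^sup>2 \<le> ((1 - t) * norm y + t * norm z)\<^sup>2"
    by (simp add: power_mono)
  also have "\<dots> \<le> (1 - t) * (norm y)\<^sup>2 + t * (norm z)\<^sup>2"
    using convex_onD[OF convex_power2, of t "norm y" "norm z"] t by simp
  finally show "(norm ((1 - t) *\<^sub>R y + t *\<^sub>R z))\<^sup>2 \<le> (1 - t) * (norm y)\<^sup>2 + t * (norm z)\<^sup>2" .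
qed simp

lemma strongly_convex_imp_convex_on:
  assumes "convex_on UNIV (\<lambda>y. f y - \<mu> / 2 * (norm y)\<^sup>2)" and "\<mu> \<ge> 0"
  shows "convex_on UNIV f"
  using convex_on_add[OF assms(1) convex_on_cmul[OF _ convex_on_norm_power2, of "\<mu> / 2"]] assms(2)
  by simp

lemma convex_on_along_line:
  assumes "convex_on UNIV f"
  shows "convex_on UNIV (\<lambda>t::real. f (y + t *\<^sub>R d))"
proof (rule convex_onI)
  fix t a b :: real
  assume t: "0 < t" "t < 1"
  have "y + ((1 - t) *\<^sub>R a + t *\<^sub>R b) *\<^sub>R d = (1 - t) *\<^sub>R (y + a *\<^sub>R d) + t *\<^sub>R (y + b *\<^sub>R d)"
    by (simp add: algebra_simps)
  then show "f (y + ((1 - t) *\<^sub>R a + t *\<^sub>R b) *\<^sub>R d) \<le> (1 - t) * f (y + a *\<^sub>R d) + t * f (y + b *\<^sub>R d)"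
    using convex_onD[OF assms, of t] t by simp
qed simp

lemma convex_on_imp_above_tangent_gradient:
  fixes f :: "'a::real_inner \<Rightarrow> real"
  assumes cvx: "convex_on UNIV f"
    and grad: "\<And>y. (f has_derivative (\<lambda>h. grad y \<bullet> h)) (at y)"
  shows "f y + grad y \<bullet> (z - y) \<le> f z"
proof -
  define d where "d = z - y"
  have line: "((\<lambda>t. y + t *\<^sub>R d) has_derivative (\<lambda>t. t *\<^sub>R d)) (at 0)"
    by (auto intro!: derivative_eq_intros)
  have "((\<lambda>t. f (y + t *\<^sub>R d)) has_real_derivative grad y \<bullet> d) (at 0)"
    using has_derivative_compose[OF line grad]
    by (simp add: o_def has_field_derivative_def mult_commute_abs)
  from convex_on_imp_above_tangent[OF convex_on_along_line[OF cvx], of 0 1,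
      OF _ _ _ has_field_derivative_at_within[OF this]]
  show ?thesis by (simp add: d_def)
qed

text \<open>The sharp constant is \<open>L / 2\<close>; the weaker \<open>L\<close> comes straight from the mean value
  inequality and still suffices for the step size \<open>1 / L\<close>.\<close>
lemma lipschitz_gradient_descent_bound:
  fixes f :: "'a::real_inner \<Rightarrow> real"
  assumes grad: "\<And>y. (f has_derivative (\<lambda>h. grad y \<bullet> h)) (at y)"
    and grad_lip: "\<And>y z. norm (grad y - grad z) \<le> L * norm (y - z)" and L: "L \<ge> 0"
  shows "f z \<le> f y + grad y \<bullet> (z - y) + L * (norm (z - y))\<^sup>2"
proof -
  let ?S = "cball y (norm (z - y))"
  have "norm ((f z - grad y \<bullet> z) - (f y - grad y \<bullet> y)) \<le> (L * norm (z - y)) * norm (z - y)"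
  proof (rule differentiable_bound[where S = ?S and f' = "\<lambda>w v. grad w \<bullet> v - grad y \<bullet> v"])
    fix w assume w: "w \<in> ?S"
    show "((\<lambda>w. f w - grad y \<bullet> w) has_derivative (\<lambda>v. grad w \<bullet> v - grad y \<bullet> v)) (at w within ?S)"
      by (intro has_derivative_diff has_derivative_at_withinI[OF grad] has_derivative_inner_right
          has_derivative_ident)
    show "onorm (\<lambda>v. grad w \<bullet> v - grad y \<bullet> v) \<le> L * norm (z - y)"
    proof (rule onorm_bound)
      show "0 \<le> L * norm (z - y)" using L by simp
      fix v
      have "norm (grad w - grad y) \<le> L * norm (w - y)"
        by (rule grad_lip)
      also have "\<dots> \<le> L * norm (z - y)"
        using w L by (intro mult_left_mono) (auto simp: dist_norm norm_minus_commute)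
      finally have grad_bound: "norm (grad w - grad y) \<le> L * norm (z - y)" .
      have "norm (grad w \<bullet> v - grad y \<bullet> v) = \<bar>(grad w - grad y) \<bullet> v\<bar>"
        by (simp add: inner_diff_left)
      also have "\<dots> \<le> norm (grad w - grad y) * norm v"
        by (rule Cauchy_Schwarz_ineq2)
      also have "\<dots> \<le> (L * norm (z - y)) * norm v"
        using grad_bound by (rule mult_right_mono) simp
      finally show "norm (grad w \<bullet> v - grad y \<bullet> v) \<le> L * norm (z - y) * norm v" .
    qed
  qed (auto simp: dist_norm norm_minus_commute)
  then show ?thesis by (simp add: power2_eq_square inner_diff_right)
qed

text \<open>Both bounds above are evaluated at \<open>z = y - (grad y - grad x) / (2 L)\<close>, the gradient step
  from \<open>y\<close> for the function \<open>w \<mapsto> f w - grad x \<bullet> w\<close>, which is minimised at \<open>x\<close>.\<close>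
lemma convex_lipschitz_gradient_lower_bound:
  fixes f :: "'a::real_inner \<Rightarrow> real"
  assumes cvx: "convex_on UNIV f"
    and grad: "\<And>y. (f has_derivative (\<lambda>h. grad y \<bullet> h)) (at y)"
    and grad_lip: "\<And>y z. norm (grad y - grad z) \<le> L * norm (y - z)" and L: "L > 0"
  shows "f x + grad x \<bullet> (y - x) + (norm (grad y - grad x))\<^sup>2 / (4 * L) \<le> f y"
proof -
  define D where "D = grad y - grad x"
  define s where "s = 1 / (2 * L)"
  define z where "z = y - s *\<^sub>R D"
  have lower: "f x + grad x \<bullet> (z - x) \<le> f z"
    by (rule convex_on_imp_above_tangent_gradient[OF cvx grad])
  have upper: "f z \<le> f y + grad y \<bullet> (z - y) + L * (norm (z - y))\<^sup>2"
    using L by (intro lipschitz_gradient_descent_bound[OF grad grad_lip]) simp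
  have "grad y \<bullet> (z - y) - grad x \<bullet> (z - x) = - (grad x \<bullet> (y - x)) - s * (D \<bullet> D)"
    unfolding z_def D_def by (simp add: inner_diff_left inner_diff_right algebra_simps)
  moreover have "L * (norm (z - y))\<^sup>2 = s / 2 * (D \<bullet> D)"
  proof -
    have "L * (norm (z - y))\<^sup>2 = L * s\<^sup>2 * (D \<bullet> D)"
      unfolding z_def power2_norm_eq_inner by (simp add: power2_eq_square)
    also have "L * s\<^sup>2 = s / 2" using L by (simp add: s_def power2_eq_square)
    finally show ?thesis .
  qed
  ultimately have "f x + grad x \<bullet> (y - x) + (s * (D \<bullet> D) - s / 2 * (D \<bullet> D)) \<le> f y"
    using lower upper by linarith
  moreover have "s * (D \<bullet> D) - s / 2 * (D \<bullet> D) = (norm D)\<^sup>2 / (4 * L)"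
    by (simp add: s_def power2_norm_eq_inner)
  ultimately show ?thesis by (simp add: D_def)
qed

lemma convex_lipschitz_gradient_cocoercive:
  fixes f :: "'a::real_inner \<Rightarrow> real"
  assumes cvx: "convex_on UNIV f"
    and grad: "\<And>y. (f has_derivative (\<lambda>h. grad y \<bullet> h)) (at y)"
    and grad_lip: "\<And>y z. norm (grad y - grad z) \<le> L * norm (y - z)" and L: "L > 0"
  shows "(norm (grad x - grad y))\<^sup>2 / (2 * L) \<le> (grad x - grad y) \<bullet> (x - y)"
proof -
  have "(norm (grad y - grad x))\<^sup>2 / (4 * L) + (norm (grad x - grad y))\<^sup>2 / (4 * L)
      \<le> (grad x - grad y) \<bullet> (x - y)"
    using convex_lipschitz_gradient_lower_bound[OF assms, of x y]
      convex_lipschitz_gradient_lower_bound[OF assms, of y x]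
    by (simp add: inner_diff_left inner_diff_right inner_commute)
  then show ?thesis by (simp add: norm_minus_commute)
qed

lemma convex_gradient_step_nonexpansive:
  fixes f :: "'a::real_inner \<Rightarrow> real"
  assumes cvx: "convex_on UNIV f"
    and grad: "\<And>y. (f has_derivative (\<lambda>h. grad y \<bullet> h)) (at y)"
    and grad_lip: "\<And>y z. norm (grad y - grad z) \<le> L * norm (y - z)" and L: "L > 0"
  shows "norm ((x - (1 / L) *\<^sub>R grad x) - (y - (1 / L) *\<^sub>R grad y)) \<le> norm (x - y)"
proof -
  define D where "D = grad x - grad y"
  define u where "u = x - y"
  have "(norm ((x - (1 / L) *\<^sub>R grad x) - (y - (1 / L) *\<^sub>R grad y)))\<^sup>2
      = (norm (u - (1 / L) *\<^sub>R D))\<^sup>2"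
    unfolding u_def D_def by (simp add: algebra_simps)
  also have "\<dots> = (norm u)\<^sup>2 - 2 / L * (D \<bullet> u - (norm D)\<^sup>2 / (2 * L))"
    unfolding power2_norm_eq_inner using L
    by (simp add: inner_diff_left inner_diff_right inner_commute field_simps)
  also have "\<dots> \<le> (norm u)\<^sup>2"
    using convex_lipschitz_gradient_cocoercive[OF assms, of x y] L by (simp add: D_def u_def)
  finally show ?thesis unfolding u_def by (rule power2_le_imp_le) simp
qed

lemma nonexpansive_iterates_step_le:
  fixes T :: "'a::real_normed_vector \<Rightarrow> 'a"
  assumes nonexp: "\<And>y z. norm (T y - T z) \<le> norm (y - z)"
    and iter: "\<And>i. i < k \<Longrightarrow> x (Suc i) = T (x i)"
  shows "i < k \<Longrightarrow> norm (x (Suc i) - x i) \<le> norm (x 1 - x 0)"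
proof (induction i)
  case (Suc i)
  then have "norm (x (Suc (Suc i)) - x (Suc i)) \<le> norm (x (Suc i) - x i)"
    using nonexp iter[of "Suc i"] iter[of i] by simp
  with Suc show ?case by simp
qed simp

lemma norm_diff_le_steps:
  fixes x :: "nat \<Rightarrow> 'a::real_normed_vector"
  assumes "\<And>i. i < k \<Longrightarrow> norm (x (Suc i) - x i) \<le> d"
  shows "i \<le> k \<Longrightarrow> norm (x i - x 0) \<le> real i * d"
proof (induction i)
  case (Suc i)
  have "norm (x (Suc i) - x 0) \<le> norm (x (Suc i) - x i) + norm (x i - x 0)"
    using norm_triangle_ineq[of "x (Suc i) - x i" "x i - x 0"] by simp
  also have "\<dots> \<le> d + real i * d"
    using assms[of i] Suc by simp
  finally show ?case by (simp add: algebra_simps)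
qed simp

lemma gradient_descent_iterates_near_start:
  fixes f :: "'a::real_inner \<Rightarrow> real"
  assumes cvx: "convex_on UNIV f"
    and grad: "\<And>y. (f has_derivative (\<lambda>h. grad y \<bullet> h)) (at y)"
    and grad_lip: "\<And>y z. norm (grad y - grad z) \<le> L * norm (y - z)" and L: "L > 0"
    and iter: "\<And>i. i < k \<Longrightarrow> x (Suc i) = x i - (1 / L) *\<^sub>R grad (x i)"
    and i: "i \<le> k"
  shows "norm (x i - x 0) \<le> real k * (norm (grad (x 0)) / L)"
proof -
  have step: "norm (x (Suc j) - x j) \<le> norm (grad (x 0)) / L" if "j < k" for j
  proof -
    have "norm (x (Suc j) - x j) \<le> norm (x 1 - x 0)"
      using convex_gradient_step_nonexpansive[OF cvx grad grad_lip L] iter that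
      by (rule nonexpansive_iterates_step_le[where T = "\<lambda>y. y - (1 / L) *\<^sub>R grad y"])
    also have "\<dots> = norm (grad (x 0)) / L"
      using iter[of 0] that L by simp
    finally show ?thesis .
  qed
  have "norm (x i - x 0) \<le> real i * (norm (grad (x 0)) / L)"
    using step i by (rule norm_diff_le_steps)
  also have "\<dots> \<le> real k * (norm (grad (x 0)) / L)"
    using i L by (intro mult_right_mono) auto
  finally show ?thesis .
qed

lemma affine_combinations_subset_cball:
  fixes x :: "'i \<Rightarrow> 'a::real_normed_vector"
  assumes near: "\<And>i. i \<in> I \<Longrightarrow> norm (x i - a) \<le> r" and r: "r \<ge> 0"
  shows "{(\<Sum>i\<in>I. c i *\<^sub>R x i) | c. (\<Sum>i\<in>I. c i) = 1 \<and> (\<Sum>i\<in>I. \<bar>c i\<bar>) \<le> C}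
    \<subseteq> cball a (C * r)"
proof safe
  fix c :: "'i \<Rightarrow> real"
  assume sum_c: "(\<Sum>i\<in>I. c i) = 1" and sum_abs_c: "(\<Sum>i\<in>I. \<bar>c i\<bar>) \<le> C"
  have "(\<Sum>i\<in>I. c i *\<^sub>R x i) - a = (\<Sum>i\<in>I. c i *\<^sub>R (x i - a))"
    using sum_c by (simp add: scaleR_diff_right sum_subtractf flip: scaleR_sum_left)
  also have "norm \<dots> \<le> (\<Sum>i\<in>I. \<bar>c i\<bar> * r)"
    using near by (intro order_trans[OF norm_sum] sum_mono) (simp add: mult_left_mono)
  also have "\<dots> \<le> C * r"
    using sum_abs_c r by (simp add: mult_right_mono flip: sum_distrib_right)
  finally show "(\<Sum>i\<in>I. c i *\<^sub>R x i) \<in> cball a (C * r)"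
    by (simp add: dist_norm norm_minus_commute)
qed

lemma lipschitz_on_cball_hessian_residual:
  fixes grad :: "'a::real_normed_vector \<Rightarrow> 'b::real_normed_vector"
  assumes hess: "\<And>y. (grad has_derivative blinfun_apply (Hess y)) (at y)"
    and hess_lip: "\<And>y z. norm (Hess y - Hess z) \<le> \<eta> * norm (y - z)"
    and \<eta>: "\<eta> \<ge> 0" and R: "R \<ge> 0"
  shows "(\<eta> * R)-lipschitz_on (cball a R) (\<lambda>y. Hess a y - grad y)"
proof (rule lipschitz_onI)
  fix y z assume yz: "y \<in> cball a R" "z \<in> cball a R"
  show "dist (Hess a y - grad y) (Hess a z - grad z) \<le> \<eta> * R * dist y z"
    unfolding dist_norm
  proof (rule differentiable_bound[where S = "cball a R"
      and f' = "\<lambda>w. blinfun_apply (Hess a - Hess w)", OF _ _ _ yz])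
    fix w assume w: "w \<in> cball a R"
    show "((\<lambda>y. Hess a y - grad y) has_derivative blinfun_apply (Hess a - Hess w))
        (at w within cball a R)"
      by (auto intro!: derivative_eq_intros has_derivative_at_withinI[OF hess] simp: blinfun.diff_left)
    have "norm (Hess a - Hess w) \<le> \<eta> * norm (a - w)"
      by (rule hess_lip)
    also have "\<dots> \<le> \<eta> * R"
      using w \<eta> by (intro mult_left_mono) (auto simp: dist_norm)
    finally show "onorm (blinfun_apply (Hess a - Hess w)) \<le> \<eta> * R"
      by (simp add: norm_blinfun.rep_eq)
  qed simp
qed (use \<eta> R in simp)

lemma lipschitz_bound_nonneg:
  fixes g :: "'a::euclidean_space \<Rightarrow> 'b::real_normed_vector"
  assumes "\<And>y z. norm (g y - g z) \<le> K * norm (y - z)"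
  shows "K \<ge> 0"
proof -
  obtain e :: 'a where "e \<in> Basis" using nonempty_Basis by blast
  then have "norm e = 1" by simp
  with assms[of e 0] show ?thesis by (metis diff_zero mult.right_neutral norm_ge_zero order_trans)
qed

theorem lemma4:
  fixes f :: "'a::euclidean_space \<Rightarrow> real"
    and grad :: "'a \<Rightarrow> 'a"
    and Hess :: "'a \<Rightarrow> ('a \<Rightarrow>\<^sub>L 'a)"
    and \<mu> L \<eta> C :: real and k :: nat
    and x :: "nat \<Rightarrow> 'a"
  assumes grad: "\<And>y. (f has_derivative (\<lambda>h. grad y \<bullet> h)) (at y)"
    and hess: "\<And>y. (grad has_derivative blinfun_apply (Hess y)) (at y)"
    and hess_cont: "continuous_on UNIV Hess"
    and mu_pos: "\<mu> > 0"
    and strongly_convex: "convex_on UNIV (\<lambda>y. f y - \<mu> / 2 * (norm y)\<^sup>2)"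
    and grad_lip: "\<And>y z. norm (grad y - grad z) \<le> L * norm (y - z)"
    and hess_lip: "\<And>y z. norm (Hess y - Hess z) \<le> \<eta> * norm (y - z)"
    and k: "k \<ge> 1" and C: "C \<ge> 1"
    and iter: "\<And>i. i < k \<Longrightarrow> x (Suc i) = x i - (1 / L) *\<^sub>R grad (x i)"
  shows "(\<eta> / L\<^sup>2 * real k * C * norm (grad (x 0)))-lipschitz_on
           {(\<Sum>i\<le>k. c i *\<^sub>R x i) | c. (\<Sum>i\<le>k. c i) = 1 \<and> (\<Sum>i\<le>k. \<bar>c i\<bar>) \<le> C}
           (\<lambda>y. (1 / L) *\<^sub>R (Hess (x 0) y - grad y))"
proof (cases "L = 0")
  case True
  \<comment> \<open>Then \<open>1 / L = 0\<close> in HOL, so the map is constant.\<close>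
  then show ?thesis by (simp add: lipschitz_on_def)
next
  case False
  with lipschitz_bound_nonneg[OF grad_lip] have L: "L > 0" by simp
  have \<eta>: "\<eta> \<ge> 0" by (rule lipschitz_bound_nonneg[OF hess_lip])
  have cvx: "convex_on UNIV f"
    using strongly_convex_imp_convex_on[OF strongly_convex] mu_pos by simp
  define r where "r = real k * (norm (grad (x 0)) / L)"
  have r: "r \<ge> 0" using L by (simp add: r_def)
  have ball: "{(\<Sum>i\<le>k. c i *\<^sub>R x i) | c. (\<Sum>i\<le>k. c i) = 1 \<and> (\<Sum>i\<le>k. \<bar>c i\<bar>) \<le> C}
      \<subseteq> cball (x 0) (C * r)"
    using gradient_descent_iterates_near_start[where k = k and x = x, OF cvx grad grad_lip L iter] r
    by (intro affine_combinations_subset_cball) (auto simp: r_def)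
  have "(1 / L * (\<eta> * (C * r)))-lipschitz_on (cball (x 0) (C * r))
      (\<lambda>y. (1 / L) *\<^sub>R (Hess (x 0) y - grad y))"
    using lipschitz_on_cball_hessian_residual[OF hess hess_lip \<eta>] C r L
    by (intro lipschitz_on_cmult_nonneg) auto
  moreover have "1 / L * (\<eta> * (C * r)) = \<eta> / L\<^sup>2 * real k * C * norm (grad (x 0))"
    by (simp add: r_def power2_eq_square)
  ultimately show ?thesis
    using lipschitz_on_subset[OF _ ball] by simp
qed

end
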